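(* Let $q(x)\in\mathbb{Z}[x]$ be monic and let $\mathrm{sym}(q)(x)=x^{\deg q}\,q\!\left(x+\frac1x\right)$. Then $\mathrm{sym}(q)$ is symplectically irreducible if and only if $q(x)$ is irreducible over $\mathbb{Z}$.
   Context: A symplectic polynomial is an integer polynomial that is the characteristic polynomial of some element of $\mathrm{Sp}(2n,\mathbb{Z})$; equivalently, an even-degree integer polynomial $a_{2n}x^{2n}+\cdots+a_0$ that is monic ($a_{2n}=1$) and palindromic ($a_i=a_{2n-i}$). A symplectic polynomial is symplectically irreducible if it is not the product of two nontrivial symplectic polynomials. *)

theory Defs
  imports "HOL-Computational_Algebra.Polynomial_Factorial"
begin

definition symplectic_poly :: "int poly \<Rightarrow> bool" where
  "symplectic_poly p \<longleftrightarrow> even (degree p) \<and> lead_coeff p = 1 \<and>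
     (\<forall>i\<le>degree p. coeff p i = coeff p (degree p - i))"

definition symp_irreducible :: "int poly \<Rightarrow> bool" where
  "symp_irreducible p \<longleftrightarrow> symplectic_poly p \<and> degree p > 0 \<and>
     \<not> (\<exists>f g. symplectic_poly f \<and> symplectic_poly g \<and> degree f > 0 \<and> degree g > 0
              \<and> p = f * g)"

text \<open>sym(q)(x) = x^(deg q) q(x + 1/x) = sum_i q_i x^(deg q - i) (x^2+1)^i.\<close>
definition sym_poly :: "int poly \<Rightarrow> int poly" where
  "sym_poly q = (\<Sum>i\<le>degree q. smult (coeff q i) ([:1, 0, 1:] ^ i * monom 1 (degree q - i)))"

end

theory Submission
  imports Defs
begin

text \<open>
  For a degree bound \<open>n\<close>, the map \<open>q \<mapsto> x^n q(x + 1/x)\<close> is linear, injective on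
  polynomials of degree at most \<open>n\<close>, and multiplicative in the sense that the bounds add.
  Its image is the space of polynomials of degree at most \<open>2n\<close> with coefficients symmetric
  about \<open>n\<close>, spanned by the palindromes \<open>(x^2 + 1)^i x^(n-i)\<close>. Hence \<open>sym\<close> is a
  degree-doubling monoid isomorphism from the monic integer polynomials onto the symplectic
  ones, so it turns factorizations into two monic factors of positive degree into
  factorizations into two nontrivial symplectic ones and back.
\<close>

text \<open>\<open>sym_hom n q = x^n q(x + 1/x)\<close> when \<open>degree q \<le> n\<close>; coefficients of \<open>q\<close> beyond \<open>n\<close>
  are ignored.\<close>
definition sym_hom :: "nat \<Rightarrow> 'a::comm_semiring_1 poly \<Rightarrow> 'a poly" where
  "sym_hom n q = (\<Sum>i\<le>n. smult (coeff q i) ([:1, 0, 1:] ^ i * monom 1 (n - i)))"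

lemma sym_poly_eq_sym_hom: "sym_poly q = sym_hom (degree q) q"
  by (simp add: sym_poly_def sym_hom_def)

lemma sym_hom_0_left: "sym_hom 0 q = [:coeff q 0:]"
  by (simp add: sym_hom_def monom_0)

lemma sym_hom_0_right [simp]: "sym_hom n 0 = 0"
  by (simp add: sym_hom_def)

lemma sym_hom_add: "sym_hom n (p + q) = sym_hom n p + sym_hom n q"
  by (simp add: sym_hom_def sum.distrib smult_add_left)

lemma sym_hom_smult: "sym_hom n (smult c q) = smult c (sym_hom n q)"
  by (simp add: sym_hom_def sum_distrib_left[where r = "[:c:]", simplified])

lemma sym_hom_Suc_pCons:
  "sym_hom (Suc n) (pCons c a) = monom c (Suc n) + [:1, 0, 1:] * sym_hom n a"
proof -
  have "sym_hom (Suc n) (pCons c a) = smult c (monom 1 (Suc n)) +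
      (\<Sum>i\<le>n. smult (coeff a i) ([:1, 0, 1:] ^ Suc i * monom 1 (n - i)))"
    unfolding sym_hom_def by (subst sum.atMost_Suc_shift) simp
  then show ?thesis
    by (simp add: sym_hom_def sum_distrib_left smult_monom algebra_simps)
qed

lemma sym_hom_Suc: "degree q \<le> n \<Longrightarrow> sym_hom (Suc n) q = [:0, 1:] * sym_hom n q"
  by (simp add: sym_hom_def coeff_eq_0 sum_distrib_left Suc_diff_le monom_Suc algebra_simps)

lemma sym_hom_shift: "degree q \<le> n \<Longrightarrow> sym_hom (n + k) q = [:0, 1:] ^ k * sym_hom n q"
  by (induction k) (simp_all add: sym_hom_Suc)

lemma sym_hom_mult:
  "degree a \<le> m \<Longrightarrow> degree b \<le> n \<Longrightarrow> sym_hom (m + n) (a * b) = sym_hom m a * sym_hom n b"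
proof (induction m arbitrary: a)
  case 0
  then show ?case
    by (auto simp: sym_hom_0_left sym_hom_smult elim: degree_eq_zeroE)
next
  case (Suc m)
  obtain c a' where a: "a = pCons c a'" by (cases a)
  have "degree a' \<le> m" using Suc.prems a by (cases "a' = 0") auto
  then have "sym_hom (Suc (m + n)) (pCons 0 (a' * b)) = [:1, 0, 1:] * (sym_hom m a' * sym_hom n b)"
    using Suc by (simp add: sym_hom_Suc_pCons)
  moreover have "sym_hom (Suc m + n) b = [:0, 1:] ^ Suc m * sym_hom n b"
    using sym_hom_shift[of b n "Suc m"] Suc.prems by (simp add: add.commute)
  ultimately show ?case
    by (simp add: a sym_hom_add sym_hom_smult sym_hom_Suc_pCons monom_altdef algebra_simps)
qed

definition palindromic :: "nat \<Rightarrow> 'a::zero poly \<Rightarrow> bool" where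
  "palindromic N p \<longleftrightarrow> degree p \<le> N \<and> (\<forall>i\<le>N. coeff p i = coeff p (N - i))"

lemma palindromic_degree_le: "palindromic N p \<Longrightarrow> degree p \<le> N"
  by (simp add: palindromic_def)

lemma palindromic_coeff: "palindromic N p \<Longrightarrow> i \<le> N \<Longrightarrow> coeff p i = coeff p (N - i)"
  unfolding palindromic_def by blast

lemma coeff_monom_mult_reflect_poly:
  fixes p :: "'a::comm_semiring_1 poly"
  assumes "degree p \<le> N"
  shows "coeff (monom 1 (N - degree p) * reflect_poly p) k =
    (if k \<le> N then coeff p (N - k) else 0)"
  using assms by (auto simp: coeff_monom_mult coeff_reflect_poly coeff_eq_0)

lemma palindromic_iff_reflect_poly:
  fixes p :: "'a::comm_semiring_1 poly"
  shows "palindromic N p \<longleftrightarrow> degree p \<le> N \<and> monom 1 (N - degree p) * reflect_poly p = p"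
proof (cases "degree p \<le> N")
  case True
  then show ?thesis
    unfolding palindromic_def poly_eq_iff coeff_monom_mult_reflect_poly[OF True]
    by (metis coeff_eq_0 diff_diff_cancel le_less_trans not_le)
qed (simp add: palindromic_def)

lemma palindromic_0 [simp]: "palindromic N 0"
  by (simp add: palindromic_def)

lemma palindromic_add: "palindromic N p \<Longrightarrow> palindromic N q \<Longrightarrow> palindromic N (p + q)"
  unfolding palindromic_def by (metis coeff_add degree_add_le)

lemma palindromic_diff:
  fixes p :: "'a::ab_group_add poly"
  shows "palindromic N p \<Longrightarrow> palindromic N q \<Longrightarrow> palindromic N (p - q)"
  unfolding palindromic_def by (metis coeff_diff degree_diff_le)

lemma palindromic_smult: "palindromic N p \<Longrightarrow> palindromic N (smult c p)"
  unfolding palindromic_def by (metis coeff_smult degree_smult_le le_trans)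

lemma palindromic_sum:
  "(\<And>i. i \<in> A \<Longrightarrow> palindromic N (f i)) \<Longrightarrow> palindromic N (\<Sum>i\<in>A. f i)"
  by (induction A rule: infinite_finite_induct) (simp_all add: palindromic_add)

lemma palindromic_monom: "palindromic (2 * n) (monom c n)"
  by (auto simp: palindromic_def coeff_monom le_trans[OF degree_monom_le])

lemma palindromic_mult:
  fixes p q :: "'a::{comm_semiring_1, semiring_no_zero_divisors} poly"
  assumes "palindromic M p" and "palindromic N q"
  shows "palindromic (M + N) (p * q)"
proof (cases "p = 0 \<or> q = 0")
  case False
  then have deg: "degree (p * q) = degree p + degree q"
    by (simp add: degree_mult_eq)
  from assms have le: "degree p \<le> M" "degree q \<le> N"
    and p: "monom 1 (M - degree p) * reflect_poly p = p"
    and q: "monom 1 (N - degree q) * reflect_poly q = q"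
    by (simp_all add: palindromic_iff_reflect_poly)
  from le have "M + N - degree (p * q) = (M - degree p) + (N - degree q)"
    by (simp add: deg)
  then have "monom 1 (M + N - degree (p * q)) * reflect_poly (p * q) =
      (monom 1 (M - degree p) * reflect_poly p) * (monom 1 (N - degree q) * reflect_poly q)"
    by (simp add: reflect_poly_mult ac_simps) (simp add: mult_monom)
  with le show ?thesis
    by (simp add: palindromic_iff_reflect_poly deg p q)
qed auto

lemma palindromic_power: "palindromic N p \<Longrightarrow> palindromic (k * N) (p ^ k)"
  for p :: "'a::{comm_semiring_1, semiring_no_zero_divisors} poly"
proof (induction k)
  case 0
  then show ?case by (simp add: palindromic_def)
next
  case (Suc k)
  then show ?case using palindromic_mult[of N p "k * N" "p ^ k"] by simp
qed

lemma palindromic_sym_hom: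
  fixes q :: "'a::{comm_semiring_1, semiring_no_zero_divisors} poly"
  shows "palindromic (2 * n) (sym_hom n q)"
proof -
  have "palindromic 2 [:1, 0, 1 :: 'a:]"
    by (auto simp: palindromic_def numeral_2_eq_2 le_Suc_eq)
  then have "palindromic (i * 2 + 2 * (n - i)) ([:1, 0, 1 :: 'a:] ^ i * monom 1 (n - i))" for i
    by (intro palindromic_mult palindromic_power palindromic_monom)
  moreover have "i * 2 + 2 * (n - i) = 2 * n" if "i \<le> n" for i
    using that by simp
  ultimately show ?thesis
    unfolding sym_hom_def by (intro palindromic_sum palindromic_smult) (metis atMost_iff)
qed

lemma coeff_0_sym_hom: "coeff (sym_hom n q) 0 = coeff q n"
  by (simp add: sym_hom_def poly_sum poly_monom power_0_left if_distrib[of "times _"]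
      cong: if_cong flip: poly_0_coeff_0)

lemma degree_le_of_coeff_Suc_eq_0: "degree p \<le> Suc n \<Longrightarrow> coeff p (Suc n) = 0 \<Longrightarrow> degree p \<le> n"
  by (metis le_SucE leading_coeff_0_iff degree_0 nat.distinct(1))

lemma palindromic_pCons_0:
  assumes "palindromic (Suc (Suc N)) (pCons 0 r)"
  shows "palindromic N r"
proof -
  have "coeff r (Suc N) = 0"
    using palindromic_coeff[OF assms, of "Suc (Suc N)"] by simp
  moreover have "degree r \<le> Suc N"
    using palindromic_degree_le[OF assms] by (cases "r = 0") auto
  ultimately have "degree r \<le> N"
    by (simp add: degree_le_of_coeff_Suc_eq_0)
  moreover have "coeff r i = coeff r (N - i)" if "i \<le> N" for i
    using palindromic_coeff[OF assms, of "Suc i"] that by (simp add: Suc_diff_le)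
  ultimately show ?thesis
    unfolding palindromic_def by blast
qed

lemma degree_sym_hom_le: "degree (sym_hom n q) \<le> 2 * n"
  for q :: "'a::{comm_semiring_1, semiring_no_zero_divisors} poly"
  using palindromic_degree_le[OF palindromic_sym_hom] .

lemma coeff_sym_hom_top: "coeff (sym_hom n q) (2 * n) = coeff q n"
  for q :: "'a::{comm_semiring_1, semiring_no_zero_divisors} poly"
  using palindromic_coeff[OF palindromic_sym_hom[of n q], of 0] by (simp add: coeff_0_sym_hom)

lemma degree_sym_hom: "coeff q n \<noteq> 0 \<Longrightarrow> degree (sym_hom n q) = 2 * n"
  for q :: "'a::{comm_semiring_1, semiring_no_zero_divisors} poly"
  by (metis antisym coeff_sym_hom_top degree_sym_hom_le le_degree)

lemma sym_hom_eq_0_iff: "degree q \<le> n \<Longrightarrow> sym_hom n q = 0 \<longleftrightarrow> q = 0"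
proof (induction n)
  case 0
  then show ?case
    by (auto simp: sym_hom_0_left elim: degree_eq_zeroE)
next
  case (Suc n)
  show ?case
  proof
    assume "sym_hom (Suc n) q = 0"
    then have "coeff q (Suc n) = 0"
      by (metis coeff_0_sym_hom coeff_0)
    with Suc.prems have "degree q \<le> n"
      by (simp add: degree_le_of_coeff_Suc_eq_0)
    with \<open>sym_hom (Suc n) q = 0\<close> Suc.IH show "q = 0"
      by (simp add: sym_hom_Suc)
  qed simp
qed

lemma sym_hom_inj:
  fixes a b :: "'a::comm_ring_1 poly"
  assumes "degree a \<le> n" and "degree b \<le> n" and "sym_hom n a = sym_hom n b"
  shows "a = b"
proof -
  have "sym_hom n (a - b) = 0"
    using assms(3) sym_hom_add[of n "a - b" b] by simp
  with assms(1,2) show ?thesis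
    by (simp add: sym_hom_eq_0_iff degree_diff_le)
qed

lemma palindromic_imp_sym_hom:
  fixes p :: "'a::idom poly"
  assumes "palindromic (2 * n) p"
  shows "\<exists>q. degree q \<le> n \<and> p = sym_hom n q"
  using assms
proof (induction n arbitrary: p)
  case 0
  then have "degree p = 0"
    using palindromic_degree_le by fastforce
  then show ?case
    by (intro exI[of _ p]) (auto simp: sym_hom_0_left elim: degree_eq_zeroE)
next
  case (Suc n)
  \<comment> \<open>Removing the top term leaves a palindrome with vanishing ends, i.e. \<open>x\<close> times a
    palindrome of width \<open>2n\<close>.\<close>
  define top_term where "top_term = monom (coeff p (2 * Suc n)) (Suc n)"
  define p' where "p' = p - sym_hom (Suc n) top_term"
  have p': "palindromic (2 * Suc n) p'"
    unfolding p'_def by (intro palindromic_diff Suc.prems palindromic_sym_hom)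
  have "coeff p' (2 * Suc n) = 0"
    using coeff_sym_hom_top[of "Suc n" top_term] by (simp add: p'_def top_term_def)
  then have "coeff p' 0 = 0"
    using palindromic_coeff[OF p', of 0] by simp
  then obtain r where r: "p' = pCons 0 r"
    by (cases p') auto
  with p' have "palindromic (2 * n) r"
    by (metis palindromic_pCons_0 mult_Suc_right add_2_eq_Suc)
  then obtain q where q: "degree q \<le> n" "r = sym_hom n q"
    using Suc.IH by blast
  have "p = sym_hom (Suc n) top_term + p'"
    by (simp add: p'_def)
  also have "p' = sym_hom (Suc n) q"
    using q by (simp add: r sym_hom_Suc)
  finally have "p = sym_hom (Suc n) (top_term + q)"
    by (simp add: sym_hom_add)
  moreover have "degree (top_term + q) \<le> Suc n"
    using q(1) by (simp add: top_term_def degree_add_le le_trans[OF degree_monom_le])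
  ultimately show ?case
    by blast
qed

lemma degree_sym_poly: "degree (sym_poly q) = 2 * degree q"
  by (cases "q = 0") (simp_all add: sym_poly_eq_sym_hom degree_sym_hom)

lemma lead_coeff_sym_poly: "lead_coeff (sym_poly q) = lead_coeff q"
  unfolding degree_sym_poly by (simp add: sym_poly_eq_sym_hom coeff_sym_hom_top)

lemma sym_poly_mult: "sym_poly (a * b) = sym_poly a * sym_poly b"
  by (cases "a = 0 \<or> b = 0") (auto simp: sym_poly_eq_sym_hom degree_mult_eq sym_hom_mult)

lemma inj_sym_poly: "inj sym_poly"
proof (rule injI)
  fix a b assume eq: "sym_poly a = sym_poly b"
  then have "degree a = degree b"
    using degree_sym_poly[of a] degree_sym_poly[of b] by simp
  with eq show "a = b"
    by (intro sym_hom_inj[of a "degree a" b]) (simp_all add: sym_poly_eq_sym_hom)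
qed

lemma symplectic_poly_iff_palindromic:
  "symplectic_poly p \<longleftrightarrow> even (degree p) \<and> lead_coeff p = 1 \<and> palindromic (degree p) p"
  by (simp add: symplectic_poly_def palindromic_def)

lemma symplectic_poly_iff_sym_poly:
  "symplectic_poly p \<longleftrightarrow> (\<exists>q. lead_coeff q = 1 \<and> p = sym_poly q)"
proof
  assume "symplectic_poly p"
  then obtain n where n: "degree p = 2 * n" and lead: "lead_coeff p = 1"
    and pal: "palindromic (2 * n) p"
    by (auto simp: symplectic_poly_iff_palindromic elim: evenE)
  then obtain q where q: "degree q \<le> n" "p = sym_hom n q"
    using palindromic_imp_sym_hom by blast
  have "coeff q n = 1"
    using coeff_sym_hom_top[of n q] q(2) n lead by simp
  with q(1) have "degree q = n"
    using le_degree[of q n] by simp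
  with q \<open>coeff q n = 1\<close> show "\<exists>q. lead_coeff q = 1 \<and> p = sym_poly q"
    by (auto simp: sym_poly_eq_sym_hom)
next
  assume "\<exists>q. lead_coeff q = 1 \<and> p = sym_poly q"
  then obtain q where "lead_coeff q = 1" "p = sym_poly q"
    by blast
  moreover have "palindromic (degree (sym_poly q)) (sym_poly q)"
    unfolding degree_sym_poly by (simp add: sym_poly_eq_sym_hom palindromic_sym_hom)
  ultimately show "symplectic_poly p"
    by (simp add: symplectic_poly_iff_palindromic lead_coeff_sym_poly) (simp add: degree_sym_poly)
qed

definition monic_reducible :: "'a::comm_semiring_1 poly \<Rightarrow> bool" where
  "monic_reducible q \<longleftrightarrow>
    (\<exists>a b. lead_coeff a = 1 \<and> lead_coeff b = 1 \<and> 0 < degree a \<and> 0 < degree b \<and> q = a * b)"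

lemma symplectic_factorization_iff_monic_reducible:
  "(\<exists>f g. symplectic_poly f \<and> symplectic_poly g \<and> 0 < degree f \<and> 0 < degree g \<and>
      sym_poly q = f * g) \<longleftrightarrow> monic_reducible q"
  (is "?symplectic_factors \<longleftrightarrow> _")
proof
  assume ?symplectic_factors
  then obtain a b where "lead_coeff a = 1" "lead_coeff b = 1"
    and "0 < degree (sym_poly a)" "0 < degree (sym_poly b)"
    and "sym_poly q = sym_poly a * sym_poly b"
    by (auto simp: symplectic_poly_iff_sym_poly)
  then show "monic_reducible q"
    unfolding monic_reducible_def
    by (intro exI[of _ a] exI[of _ b])
      (simp add: degree_sym_poly inj_eq[OF inj_sym_poly] flip: sym_poly_mult)
next
  assume "monic_reducible q"
  then obtain a b where "lead_coeff a = 1" "lead_coeff b = 1" "0 < degree a" "0 < degree b"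
    and "q = a * b"
    by (auto simp: monic_reducible_def)
  then show ?symplectic_factors
    by (intro exI[of _ "sym_poly a"] exI[of _ "sym_poly b"])
      (auto simp: symplectic_poly_iff_sym_poly degree_sym_poly sym_poly_mult)
qed

lemma is_unit_iff_degree_0:
  fixes a :: "'a::{comm_semiring_1, semiring_no_zero_divisors} poly"
  assumes "lead_coeff a dvd 1"
  shows "a dvd 1 \<longleftrightarrow> degree a = 0"
  using assms by (auto simp: is_unit_poly_iff elim!: degree_eq_zeroE)

lemma irreducible_monic_iff:
  fixes q :: "'a::idom poly"
  assumes "lead_coeff q = 1"
  shows "irreducible q \<longleftrightarrow> 0 < degree q \<and> \<not> monic_reducible q"
proof
  assume irr: "irreducible q"
  then have "0 < degree q"
    using assms is_unit_iff_degree_0[of q] by (auto simp: irreducible_def)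
  moreover have "\<not> monic_reducible q"
  proof
    assume "monic_reducible q"
    then obtain a b where "lead_coeff a = 1" "lead_coeff b = 1" "0 < degree a" "0 < degree b"
      and "q = a * b"
      by (auto simp: monic_reducible_def)
    then show False
      using irreducibleD[OF irr, of a b] is_unit_iff_degree_0[of a] is_unit_iff_degree_0[of b]
      by simp
  qed
  ultimately show "0 < degree q \<and> \<not> monic_reducible q"
    by blast
next
  assume rhs: "0 < degree q \<and> \<not> monic_reducible q"
  show "irreducible q"
  proof (rule irreducibleI)
    show "q \<noteq> 0" "\<not> q dvd 1"
      using rhs assms is_unit_iff_degree_0[of q] by auto
  next
    fix a b assume q: "q = a * b"
    then have ab: "lead_coeff a * lead_coeff b = 1"
      using assms by (simp add: lead_coeff_mult)
    then have units: "lead_coeff a dvd 1" "lead_coeff b dvd 1"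
      by (metis dvd_triv_left, metis dvd_triv_right)
    have "q = smult (lead_coeff b) a * smult (lead_coeff a) b"
      using q ab by (simp add: mult.commute)
    moreover have "lead_coeff (smult (lead_coeff b) a) = 1"
      and "lead_coeff (smult (lead_coeff a) b) = 1"
      using ab by (metis lead_coeff_smult mult.commute)+
    moreover have "degree (smult (lead_coeff b) a) = degree a"
      and "degree (smult (lead_coeff a) b) = degree b"
      using ab by auto
    ultimately have "degree a = 0 \<or> degree b = 0"
      using rhs unfolding monic_reducible_def by (metis gr0I)
    with units show "a dvd 1 \<or> b dvd 1"
      using is_unit_iff_degree_0 by blast
  qed
qed

theorem lemma3p1:
  fixes q :: "int poly"
  assumes "lead_coeff q = 1"
  shows "symp_irreducible (sym_poly q) \<longleftrightarrow> irreducible q"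
proof -
  have "symplectic_poly (sym_poly q)"
    using symplectic_poly_iff_sym_poly assms by blast
  then show ?thesis
    unfolding symp_irreducible_def irreducible_monic_iff[OF assms]
      symplectic_factorization_iff_monic_reducible
    by (simp add: degree_sym_poly)
qed

end
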